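(* Let $d_1\in\mathbb{Z}$, $f\in\mathcal{E}_{d_1}$, and let $\zeta\in\mathbb{S}^1$ be a Lebesgue point of $\dot f$ with $(f\wedge\dot f)(\zeta)\ne0$. Then for every $d_2\in\mathbb{Z}$ such that $(d_2-d_1)\cdot(f\wedge\dot f)(\zeta)<0$ there exists $g\in\mathcal{E}_{d_2}$ with $\int_{\mathbb{S}^1}|\dot f-\dot g|<2\pi|d_1-d_2|$.
   Context: $W^{1,1}(\mathbb{S}^1;\mathbb{S}^1)=\{f\in W^{1,1}(\mathbb{S}^1;\mathbb{R}^2):|f|=1\}$; $\dot f$ is the arclength derivative (an $L^1$ function on $\mathbb{S}^1$); $\mathcal{E}_d=\{f\in W^{1,1}(\mathbb{S}^1;\mathbb{S}^1):\deg f=d\}$; for $f=(f_1,f_2)$, $f\wedge\dot f=f_1\dot f_2-f_2\dot f_1$. *)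

theory Defs
  imports "HOL-Complex_Analysis.Complex_Analysis"
begin

(* S^1 is parametrised by the angle theta (arclength), maps S^1 -> C are 2pi-periodic
   functions real => complex.  W11_S1 f g : f is in W^{1,1}(S^1;S^1) and g is (a
   representative of) its arclength derivative, i.e. g is locally integrable and
   f is the indefinite integral of g. *)
definition W11_S1 :: "(real \<Rightarrow> complex) \<Rightarrow> (real \<Rightarrow> complex) \<Rightarrow> bool" where
  "W11_S1 f g \<longleftrightarrow>
     (\<forall>x. f (x + 2*pi) = f x) \<and> (\<forall>x. cmod (f x) = 1) \<and>
     (\<forall>a b. set_integrable lborel {a..b} g) \<and>
     (\<forall>a b. a \<le> b \<longrightarrow> f b - f a = (LINT s:{a..b}|lborel. g s))"

definition S1_degree :: "(real \<Rightarrow> complex) \<Rightarrow> complex" where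
  "S1_degree f = winding_number (\<lambda>t. f (2*pi*t)) 0"

definition wedge :: "complex \<Rightarrow> complex \<Rightarrow> real" where
  "wedge a b = Re a * Im b - Im a * Re b"

definition lebesgue_point :: "(real \<Rightarrow> complex) \<Rightarrow> real \<Rightarrow> bool" where
  "lebesgue_point g x \<longleftrightarrow>
     ((\<lambda>r. (LINT s:{x-r..x+r}|lborel. cmod (g s - g x)) / (2*r)) \<longlongrightarrow> 0) (at_right 0)"

end

theory Submission
  imports Defs
begin

text \<open>
  At a Lebesgue point \<open>\<zeta>\<close> of the derivative, \<open>|f| = 1\<close> forces \<open>g \<zeta> = \<i> \<omega> f \<zeta>\<close> with
  \<open>\<omega> = wedge (f \<zeta>) (g \<zeta>)\<close>: near \<open>\<zeta>\<close> the map \<open>f\<close> rotates with angular speed \<open>\<omega>\<close>.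
  Multiply \<open>f\<close> by a phase \<open>V\<close> that winds \<open>k = d\<^sub>1 - d\<^sub>2\<close> times backwards around the circle,
  at constant speed \<open>a = 2\<pi>k/\<epsilon>\<close>, on a window of length \<open>\<epsilon>\<close> ending at \<open>\<zeta>\<close>, and is constant
  elsewhere; then \<open>f V\<close> has degree \<open>d\<^sub>2\<close>.  In the window the derivative changes by about
  \<open>-\<i> f V (a - \<omega> (1 - e\<^sup>i\<^sup>\<theta>))\<close>, and because \<open>a\<close> and \<open>\<omega>\<close> have the same sign its modulus is at most
  \<open>|a| - |\<omega>| (1 - cos \<theta>) + \<omega>\<^sup>2 (1 - cos \<theta>)/|a|\<close>.  Over the \<open>k\<close> full turns the cosine averages
  out, so the cost is \<open>2\<pi>|k| - |\<omega>|\<epsilon> + O(\<epsilon>\<^sup>2)\<close> plus an \<open>o(\<epsilon>)\<close> error controlled by the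
  Lebesgue point, which is below \<open>2\<pi>|k|\<close> for small \<open>\<epsilon>\<close>.
\<close>

section \<open>Integration on intervals\<close>

lemma set_integrable_shift:
  fixes F :: "real \<Rightarrow> 'a :: {banach, second_countable_topology}"
  shows "set_integrable lborel {a..b} (\<lambda>s. F (s + T)) \<longleftrightarrow> set_integrable lborel {a+T..b+T} F"
proof -
  have "(\<lambda>x. indicator {a+T..b+T} (T + 1 * x) *\<^sub>R F (T + 1 * x)) = (\<lambda>x. indicator {a..b} x *\<^sub>R F (x + T))"
    by (auto simp: indicator_def add.commute)
  then show ?thesis
    using lborel_integrable_real_affine_iff[where c=1 and t=T and f="\<lambda>y. indicator {a+T..b+T} y *\<^sub>R F y"]
    unfolding set_integrable_def by simp
qed

lemma set_integral_shift:
  fixes F :: "real \<Rightarrow> 'a :: {banach, second_countable_topology}"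
  shows "(LINT s:{a..b}|lborel. F (s + T)) = (LINT s:{a+T..b+T}|lborel. F s)"
proof -
  have "(\<lambda>x. indicator {a+T..b+T} (T + 1 * x) *\<^sub>R F (T + 1 * x)) = (\<lambda>x. indicator {a..b} x *\<^sub>R F (x + T))"
    by (auto simp: indicator_def add.commute)
  then show ?thesis
    using lborel_integral_real_affine[where c=1 and t=T and f="\<lambda>y. indicator {a+T..b+T} y *\<^sub>R F y"]
    unfolding set_lebesgue_integral_def by simp
qed

lemma set_integrable_Icc_bounded:
  fixes h :: "real \<Rightarrow> 'b::{banach, second_countable_topology}"
  assumes "h \<in> borel_measurable borel" "\<And>x. x \<in> {a..b} \<Longrightarrow> norm (h x) \<le> M"
  shows "set_integrable lborel {a..b} h"
  unfolding set_integrable_def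
  by (rule integrableI_bounded_set_indicator[where B=M]) (use assms in \<open>auto simp: emeasure_lborel_Icc_eq\<close>)

lemma set_integrable_Icc_const:
  fixes c :: "'a::{banach, second_countable_topology}" and a b :: real
  shows "set_integrable lborel {a..b} (\<lambda>_. c)"
  by (rule set_integrable_Icc_bounded[where M="norm c"]) auto

lemma set_integral_Icc_const:
  fixes c :: "'a::{banach, second_countable_topology}"
  shows "a \<le> b \<Longrightarrow> (LINT s:{a..b}|lborel. c) = (b - a) *\<^sub>R c"
  by (subst set_integral_const) (auto simp: emeasure_lborel_Icc_eq)

lemma set_integral_nonneg_Icc_mono:
  fixes h :: "real \<Rightarrow> real"
  assumes "set_integrable lborel {c..d} h" "\<And>x. 0 \<le> h x" "c \<le> c'" "d' \<le> d"
  shows "(LINT s:{c'..d'}|lborel. h s) \<le> (LINT s:{c..d}|lborel. h s)"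
proof -
  have "set_integrable lborel {c'..d'} h"
    using assms by (intro set_integrable_subset[OF assms(1)]) auto
  then show ?thesis
    using assms unfolding set_lebesgue_integral_def set_integrable_def
    by (intro integral_mono) (auto simp: indicator_def)
qed

lemma set_integral_Icc_le_const:
  fixes h :: "real \<Rightarrow> real"
  assumes "set_integrable lborel {a..b} h" "\<And>x. x \<in> {a..b} \<Longrightarrow> h x \<le> C" "a \<le> b"
  shows "(LINT s:{a..b}|lborel. h s) \<le> (b - a) * C"
proof -
  have "(LINT s:{a..b}|lborel. h s) \<le> (LINT s:{a..b}|lborel. C)"
    by (rule set_integral_mono[OF assms(1) set_integrable_Icc_const assms(2)])
  also have "\<dots> = (b - a) * C" by (simp add: set_integral_Icc_const[OF assms(3)])
  finally show ?thesis .
qed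

lemma set_integral_cos_full_turns:
  fixes k :: int and \<epsilon> p c0 c1 :: real
  assumes "k \<noteq> 0" "0 < \<epsilon>"
  shows "(LINT s:{p..p+\<epsilon>}|lborel. c0 + c1 * cos (2*pi*k/\<epsilon> * (s - p))) = \<epsilon> * c0"
proof -
  define a where "a = 2*pi*k/\<epsilon>"
  have "a \<noteq> 0" using assms by (simp add: a_def)
  have "(LINT s:{p..p+\<epsilon>}|lborel. cos (a * (s - p))) = sin (a * (p + \<epsilon> - p)) / a - sin (a * (p - p)) / a"
    unfolding set_lebesgue_integral_def
  proof (rule integral_FTC_atLeastAtMost)
    fix x show "((\<lambda>s. sin (a * (s - p)) / a) has_vector_derivative cos (a * (x - p))) (at x within {p..p+\<epsilon>})"
      using \<open>a \<noteq> 0\<close> by (auto intro!: derivative_eq_intros simp: has_real_derivative_iff_has_vector_derivative[symmetric])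
  qed (use assms(2) in \<open>auto intro!: continuous_intros\<close>)
  also have "\<dots> = sin (a * \<epsilon>) / a" by simp
  also have "sin (a * \<epsilon>) = 0" using assms sin_integer_2pi[of k] by (simp add: a_def)
  finally have "(LINT s:{p..p+\<epsilon>}|lborel. cos (a * (s - p))) = 0" by simp
  moreover have cos_int: "set_integrable lborel {p..p+\<epsilon>} (\<lambda>s. cos (a * (s - p)))"
    by (intro borel_integrable_atLeastAtMost' continuous_intros)
  ultimately show ?thesis
    unfolding a_def[symmetric] using assms(2)
    by (simp add: set_integral_add(2)[OF set_integrable_Icc_const set_integrable_mult_right[OF cos_int]]
        set_integral_Icc_const)
qed

lemma set_integrable_mult_bounded:
  fixes g m :: "real \<Rightarrow> complex"
  assumes g: "set_integrable lborel A g" and m: "m \<in> borel_measurable borel"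
    and bound: "\<And>x. x \<in> A \<Longrightarrow> norm (m x) \<le> M"
  shows "set_integrable lborel A (\<lambda>x. g x * m x)"
proof (rule set_integrable_bound[OF set_integrable_mult_right[OF g, of "of_real M"]])
  show "set_borel_measurable lborel A (\<lambda>x. g x * m x)"
  proof -
    have "(\<lambda>x. indicator A x *\<^sub>R g x) \<in> borel_measurable borel"
      using g unfolding set_integrable_def by (simp add: borel_measurable_integrable)
    then have "(\<lambda>x. (indicator A x *\<^sub>R g x) * m x) \<in> borel_measurable borel"
      using m by measurable
    then show ?thesis unfolding set_borel_measurable_def by simp
  qed
  show "AE x in lborel. x \<in> A \<longrightarrow> norm (g x * m x) \<le> norm (of_real M * g x)"
  proof (intro AE_I2 impI)
    fix x assume "x \<in> A"
    then have "norm (m x) \<le> \<bar>M\<bar>" using bound[of x] by linarith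
    then show "norm (g x * m x) \<le> norm (of_real M * g x)"
      using mult_left_mono[of "norm (m x)" "\<bar>M\<bar>" "norm (g x)"] by (simp add: norm_mult mult.commute)
  qed
qed

lemma integral_split_at_point:
  fixes W :: "real \<Rightarrow> 'a::{banach, second_countable_topology}"
  assumes W: "integrable lborel W"
  shows "(\<integral>t. (if t \<le> s then W t else 0) \<partial>lborel) + (\<integral>t. (if s \<le> t then W t else 0) \<partial>lborel)
    = integral\<^sup>L lborel W"
proof -
  have i: "integrable lborel (\<lambda>t. if t \<le> s then W t else 0)" "integrable lborel (\<lambda>t. if s \<le> t then W t else 0)"
    using W by (auto intro!: Bochner_Integration.integrable_bound[OF W] simp: borel_measurable_integrable)
  have "(\<integral>t. (if t \<le> s then W t else 0) + (if s \<le> t then W t else 0) \<partial>lborel) = integral\<^sup>L lborel W"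
  proof (rule integral_cong_AE)
    show "AE t in lborel. (if t \<le> s then W t else 0) + (if s \<le> t then W t else 0) = W t"
      using AE_lborel_singleton[of s] by eventually_elim auto
  qed (use i W in \<open>auto simp: borel_measurable_integrable\<close>)
  then show ?thesis using i by simp
qed

text \<open>Fubini on the two halves \<open>t \<le> s\<close> and \<open>s \<le> t\<close> of the plane: the core of integration by
  parts for indefinite Lebesgue integrals.\<close>

lemma integral_triangles:
  fixes G W :: "real \<Rightarrow> complex"
  assumes G: "integrable lborel G" and W: "integrable lborel W"
  defines "lower s \<equiv> \<integral>t. indicator {..s} t *\<^sub>R W t \<partial>lborel"
    and "upper t \<equiv> \<integral>s. indicator {..t} s *\<^sub>R G s \<partial>lborel"
  shows "integrable lborel (\<lambda>s. G s * lower s)" "integrable lborel (\<lambda>t. upper t * W t)"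
    and "(\<integral>s. G s * lower s \<partial>lborel) + (\<integral>t. upper t * W t \<partial>lborel)
         = integral\<^sup>L lborel G * integral\<^sup>L lborel W"
proof -
  have [measurable]: "G \<in> borel_measurable borel" "W \<in> borel_measurable borel"
    using G W by (simp_all add: borel_measurable_integrable)
  define K where "K p = G (fst p) * W (snd p)" for p
  define K1 where "K1 p = (if snd p \<le> fst p then K p else 0)" for p
  define K2 where "K2 p = (if fst p \<le> snd p then K p else 0)" for p
  have [measurable]: "K \<in> borel_measurable (lborel \<Otimes>\<^sub>M lborel)"
    unfolding K_def by measurable
  have [measurable]: "K1 \<in> borel_measurable (lborel \<Otimes>\<^sub>M lborel)" "K2 \<in> borel_measurable (lborel \<Otimes>\<^sub>M lborel)"
    unfolding K1_def K2_def by measurable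
  have K: "integrable (lborel \<Otimes>\<^sub>M lborel) K"
  proof (rule lborel_pair.Fubini_integrable)
    have "(\<lambda>x. \<integral>y. norm (K (x, y)) \<partial>lborel) = (\<lambda>x. norm (G x) * (\<integral>y. norm (W y) \<partial>lborel))"
      by (simp add: K_def norm_mult)
    then show "integrable lborel (\<lambda>x. \<integral>y. norm (K (x, y)) \<partial>lborel)" using G by simp
    show "AE x in lborel. integrable lborel (\<lambda>y. K (x, y))" using W by (simp add: K_def)
  qed simp
  have K1: "integrable (lborel \<Otimes>\<^sub>M lborel) K1" and K2: "integrable (lborel \<Otimes>\<^sub>M lborel) K2"
    by (auto intro!: Bochner_Integration.integrable_bound[OF K] simp: K1_def K2_def)
  have lower: "(\<integral>t. K1 (s,t) \<partial>lborel) = G s * lower s" for s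
  proof -
    have "(\<integral>t. K1 (s,t) \<partial>lborel) = (\<integral>t. G s * (indicator {..s} t *\<^sub>R W t) \<partial>lborel)"
      by (rule Bochner_Integration.integral_cong) (auto simp: K1_def K_def indicator_def)
    then show ?thesis unfolding lower_def by (simp only: integral_mult_right_zero)
  qed
  have upper: "(\<integral>s. K2 (s,t) \<partial>lborel) = upper t * W t" for t
  proof -
    have "(\<integral>s. K2 (s,t) \<partial>lborel) = (\<integral>s. (indicator {..t} s *\<^sub>R G s) * W t \<partial>lborel)"
      by (rule Bochner_Integration.integral_cong) (auto simp: K2_def K_def indicator_def)
    then show ?thesis unfolding upper_def by (simp only: integral_mult_left_zero)
  qed
  show i1: "integrable lborel (\<lambda>s. G s * lower s)"
    using lborel_pair.integrable_fst'[OF K1] unfolding lower .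
  have "integrable lborel (\<lambda>t. \<integral>s. K2 (s,t) \<partial>lborel)"
    using lborel_pair.integrable_snd[of "\<lambda>s t. K2 (s,t)"] K2 by simp
  then show i2: "integrable lborel (\<lambda>t. upper t * W t)" unfolding upper .
  have diagonal: "(\<integral>t. K1 (s,t) \<partial>lborel) + (\<integral>t. K2 (s,t) \<partial>lborel) = G s * integral\<^sup>L lborel W" for s
  proof -
    have K12: "K1 (s,t) = (if t \<le> s then G s * W t else 0)" "K2 (s,t) = (if s \<le> t then G s * W t else 0)" for t
      by (simp_all add: K1_def K2_def K_def)
    show ?thesis
      unfolding K12 integral_mult_right_zero[symmetric] by (rule integral_split_at_point[OF integrable_mult_right[OF W]])
  qed
  have "(\<integral>s. G s * lower s \<partial>lborel) + (\<integral>t. upper t * W t \<partial>lborel)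
      = (\<integral>s. \<integral>t. K1 (s,t) \<partial>lborel \<partial>lborel) + (\<integral>s. \<integral>t. K2 (s,t) \<partial>lborel \<partial>lborel)"
    using lborel_pair.Fubini_integral[of "\<lambda>s t. K2 (s,t)"] K2 unfolding lower upper by simp
  also have "\<dots> = (\<integral>s. G s * integral\<^sup>L lborel W \<partial>lborel)"
    using i1 lborel_pair.integrable_fst'[OF K2] unfolding lower diagonal[symmetric] by simp
  finally show "(\<integral>s. G s * lower s \<partial>lborel) + (\<integral>t. upper t * W t \<partial>lborel)
      = integral\<^sup>L lborel G * integral\<^sup>L lborel W" by simp
qed

lemma set_integrable_mult_continuous:
  fixes g u :: "real \<Rightarrow> complex"
  assumes g: "set_integrable lborel {a..b} g" and u: "continuous_on UNIV u"
  shows "set_integrable lborel {a..b} (\<lambda>s. g s * u s)"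
proof -
  obtain M where "\<And>x. x \<in> {a..b} \<Longrightarrow> norm (u x) \<le> M"
    using compact_imp_bounded[OF compact_continuous_image[OF continuous_on_subset[OF u] compact_Icc[of a b]]]
    by (fastforce simp: bounded_iff)
  moreover have "u \<in> borel_measurable borel" using u by (rule borel_measurable_continuous_onI)
  ultimately show ?thesis by (intro set_integrable_mult_bounded[OF g]) auto
qed

lemma set_integral_product_rule:
  fixes f g u w :: "real \<Rightarrow> complex"
  assumes ab: "a \<le> b"
    and g: "set_integrable lborel {a..b} g" and w: "set_integrable lborel {a..b} w"
    and f_FTC: "\<And>x. x \<in> {a..b} \<Longrightarrow> f x - f a = (LINT s:{a..x}|lborel. g s)"
    and u_FTC: "\<And>x. x \<in> {a..b} \<Longrightarrow> u x - u a = (LINT s:{a..x}|lborel. w s)"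
    and f: "continuous_on UNIV f" and u: "continuous_on UNIV u"
  shows "set_integrable lborel {a..b} (\<lambda>s. g s * u s + f s * w s)"
    and "f b * u b - f a * u a = (LINT s:{a..b}|lborel. g s * u s + f s * w s)"
proof -
  have gu: "set_integrable lborel {a..b} (\<lambda>s. g s * u s)"
    by (rule set_integrable_mult_continuous[OF g u])
  have fw: "set_integrable lborel {a..b} (\<lambda>s. w s * f s)"
    by (rule set_integrable_mult_continuous[OF w f])
  show "set_integrable lborel {a..b} (\<lambda>s. g s * u s + f s * w s)"
    using set_integral_add(1)[OF gu fw] by (simp add: mult.commute)
  define gI where "gI s = indicator {a..b} s *\<^sub>R g s" for s
  define wI where "wI s = indicator {a..b} s *\<^sub>R w s" for s
  have gI: "integrable lborel gI" and wI: "integrable lborel wI"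
    using g w unfolding gI_def wI_def set_integrable_def by auto
  define lower where "lower s = (\<integral>t. indicator {..s} t *\<^sub>R wI t \<partial>lborel)" for s
  define upper where "upper t = (\<integral>s. indicator {..t} s *\<^sub>R gI s \<partial>lborel)" for t
  have restrict: "indicator {..x} t *\<^sub>R (indicator {a..b} t *\<^sub>R F t) = indicator {a..x} t *\<^sub>R F t"
    if "x \<in> {a..b}" for x t and F :: "real \<Rightarrow> complex"
    using that by (auto simp: indicator_def)
  have gu_split: "gI s * u s = u a * gI s + gI s * lower s" for s
  proof (cases "s \<in> {a..b}")
    case True
    then have "u s = u a + lower s"
      unfolding lower_def wI_def restrict[OF True] using u_FTC[OF True]
      by (simp add: set_lebesgue_integral_def algebra_simps)
    then show ?thesis by (simp add: algebra_simps)
  qed (simp add: gI_def)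
  have fw_split: "f t * wI t = f a * wI t + upper t * wI t" for t
  proof (cases "t \<in> {a..b}")
    case True
    then have "f t = f a + upper t"
      unfolding upper_def gI_def restrict[OF True] using f_FTC[OF True]
      by (simp add: set_lebesgue_integral_def algebra_simps)
    then show ?thesis by (simp add: algebra_simps)
  qed (simp add: wI_def)
  have "(LINT s:{a..b}|lborel. g s * u s + f s * w s)
      = (\<integral>s. gI s * u s \<partial>lborel) + (\<integral>t. f t * wI t \<partial>lborel)"
    using gu fw unfolding set_lebesgue_integral_def set_integrable_def gI_def wI_def
    by (simp add: algebra_simps)
  also have "\<dots> = u a * integral\<^sup>L lborel gI + f a * integral\<^sup>L lborel wI
      + ((\<integral>s. gI s * lower s \<partial>lborel) + (\<integral>t. upper t * wI t \<partial>lborel))"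
    unfolding gu_split fw_split
    using integral_triangles(1,2)[OF gI wI] gI wI unfolding lower_def upper_def by simp
  also have "\<dots> = u a * integral\<^sup>L lborel gI + f a * integral\<^sup>L lborel wI
      + integral\<^sup>L lborel gI * integral\<^sup>L lborel wI"
    unfolding lower_def upper_def by (simp only: integral_triangles(3)[OF gI wI])
  moreover have "integral\<^sup>L lborel gI = f b - f a" "integral\<^sup>L lborel wI = u b - u a"
    using f_FTC[of b] u_FTC[of b] ab unfolding gI_def wI_def set_lebesgue_integral_def by auto
  ultimately show "f b * u b - f a * u a = (LINT s:{a..b}|lborel. g s * u s + f s * w s)"
    by (simp add: algebra_simps)
qed

section \<open>Degree and \<open>W\<^sup>1\<^sup>,\<^sup>1\<close> maps into the circle\<close>

lemma winding_number_exp_path: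
  assumes "continuous_on {0..1} L"
  shows "winding_number (\<lambda>t. exp (L t)) 0 = (L 1 - L 0) / (2 * of_real pi * \<i>)"
proof -
  have "path L" using assms by (simp add: path_def)
  from winding_number_compose_exp[OF this] show ?thesis
    by (simp add: o_def pathstart_def pathfinish_def)
qed

lemma S1_degree_mult_exp:
  fixes f :: "real \<Rightarrow> complex" and \<Lambda> :: "real \<Rightarrow> real" and d k :: int
  assumes f: "continuous_on UNIV f" "\<And>x. f x \<noteq> 0" "S1_degree f = of_int d"
    and \<Lambda>: "continuous_on UNIV \<Lambda>" "\<Lambda> (2*pi) = \<Lambda> 0 + 1"
  shows "S1_degree (\<lambda>x. f x * exp (- (2 * of_real pi * \<i> * of_int k) * of_real (\<Lambda> x)))
      = of_int (d - k)"
proof -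
  have "continuous_on {0..1} (\<lambda>t. f (2*pi*t))"
    by (intro continuous_on_compose2[OF f(1)] continuous_intros) auto
  then obtain L where L: "continuous_on {0..1} L" and fL: "\<And>t. t \<in> {0..1} \<Longrightarrow> f (2*pi*t) = exp (L t)"
    using continuous_logarithm_on_contractible[OF _ convex_imp_contractible[OF convex_real_interval(5)]] f(2)
    by metis
  have "S1_degree f = winding_number (\<lambda>t. exp (L t)) 0"
    unfolding S1_degree_def by (rule winding_number_cong) (use fL in auto)
  with f(3) have d: "(L 1 - L 0) / (2 * of_real pi * \<i>) = of_int d"
    by (simp add: winding_number_exp_path[OF L])
  define q where "q t = L t - (2 * of_real pi * \<i> * of_int k) * of_real (\<Lambda> (2*pi*t))" for t
  have q: "continuous_on {0..1} q" unfolding q_def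
    by (intro continuous_intros L continuous_on_of_real continuous_on_compose2[OF \<Lambda>(1)]) auto
  have "S1_degree (\<lambda>x. f x * exp (- (2 * of_real pi * \<i> * of_int k) * of_real (\<Lambda> x)))
      = winding_number (\<lambda>t. exp (q t)) 0"
    unfolding S1_degree_def
    by (rule winding_number_cong) (use fL in \<open>auto simp: q_def exp_diff exp_minus field_simps\<close>)
  also have "\<dots> = (q 1 - q 0) / (2 * of_real pi * \<i>)" by (rule winding_number_exp_path[OF q])
  also have "\<dots> = (L 1 - L 0) / (2 * of_real pi * \<i>) - of_int k * (of_real (\<Lambda> (2*pi)) - of_real (\<Lambda> 0))"
    unfolding q_def by (simp add: field_simps)
  also have "\<dots> = of_int (d - k)" using d \<Lambda>(2) by simp
  finally show ?thesis .
qed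

lemma W11_S1_set_integrable: "W11_S1 f g \<Longrightarrow> set_integrable lborel {a..b} g"
  unfolding W11_S1_def by blast

lemma W11_S1_FTC: "W11_S1 f g \<Longrightarrow> a \<le> b \<Longrightarrow> f b - f a = (LINT s:{a..b}|lborel. g s)"
  unfolding W11_S1_def by blast

lemma W11_S1_norm: "W11_S1 f g \<Longrightarrow> cmod (f x) = 1"
  unfolding W11_S1_def by blast

lemma W11_S1_continuous:
  assumes W: "W11_S1 f g" shows "continuous_on UNIV f"
proof (rule continuous_at_imp_continuous_on, clarify)
  fix x0 :: real
  define a where "a = x0 - 1"
  define b where "b = x0 + 1"
  have "g integrable_on {a..b}"
    using set_borel_integral_eq_integral(1)[OF W11_S1_set_integrable[OF W]] .
  then have "continuous_on {a..b} (\<lambda>x. f a + integral {a..x} g)"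
    by (intro continuous_intros indefinite_integral_continuous_1)
  then have "continuous_on {a..b} f"
  proof (rule continuous_on_cong[THEN iffD1, rotated 2])
    fix x assume "x \<in> {a..b}"
    then show "f a + integral {a..x} g = f x"
      using W11_S1_FTC[OF W, of a x]
      by (simp add: set_borel_integral_eq_integral(2)[OF W11_S1_set_integrable[OF W]] algebra_simps)
  qed auto
  then have "continuous_on {a<..<b} f"
    by (rule continuous_on_subset) auto
  then show "isCont f x0"
    by (rule continuous_on_interior) (auto simp: a_def b_def)
qed

lemma W11_S1_periodic_int:
  assumes "W11_S1 f g" shows "f (x + 2*pi * of_int m) = f x"
proof (induction m rule: int_induct[where k=0])
  case (step1 i)
  have "f (x + 2*pi * of_int (i + 1)) = f ((x + 2*pi * of_int i) + 2*pi)" by (simp add: algebra_simps)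
  with step1 assms show ?case unfolding W11_S1_def by simp
next
  case (step2 i)
  have "f (x + 2*pi * of_int i) = f ((x + 2*pi * of_int (i - 1)) + 2*pi)" by (simp add: algebra_simps)
  with step2 assms show ?case unfolding W11_S1_def by simp
qed simp

lemma W11_S1_shift_derivative:
  assumes W: "W11_S1 f g"
  shows "W11_S1 f (\<lambda>s. g (s + 2*pi * of_int m))"
  unfolding W11_S1_def
proof (intro conjI allI impI)
  define T where "T = 2*pi * of_int m"
  show "f (x + 2 * pi) = f x" "cmod (f x) = 1" for x using W unfolding W11_S1_def by auto
  show "set_integrable lborel {a..b} (\<lambda>s. g (s + 2*pi * of_int m))" for a b
    unfolding set_integrable_shift by (rule W11_S1_set_integrable[OF W])
  fix a b :: real assume "a \<le> b"
  have "f b - f a = f (b + T) - f (a + T)" using W11_S1_periodic_int[OF W] by (simp add: T_def)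
  also have "\<dots> = (LINT s:{a+T..b+T}|lborel. g s)" using W11_S1_FTC[OF W] \<open>a \<le> b\<close> by simp
  finally show "f b - f a = (LINT s:{a..b}|lborel. g (s + 2*pi * of_int m))"
    unfolding set_integral_shift T_def .
qed

lemma W11_S1_change_derivative:
  assumes "W11_S1 f g" "W11_S1 f g'" "W11_S1 h G"
  shows "W11_S1 h (\<lambda>s. G s + (g s - g' s))"
  using assms unfolding W11_S1_def by (auto simp: set_integral_diff set_integral_add)

lemma W11_S1_mult:
  assumes f: "W11_S1 f g" and u: "W11_S1 u w"
  shows "W11_S1 (\<lambda>x. f x * u x) (\<lambda>s. g s * u s + f s * w s)"
  unfolding W11_S1_def
proof (intro conjI allI impI)
  show "f (x + 2*pi) * u (x + 2*pi) = f x * u x" "cmod (f x * u x) = 1" for x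
    using f u unfolding W11_S1_def by (auto simp: norm_mult)
  have [measurable]: "f \<in> borel_measurable borel" "u \<in> borel_measurable borel"
    using W11_S1_continuous[OF f] W11_S1_continuous[OF u] by (simp_all add: borel_measurable_continuous_onI)
  show "set_integrable lborel {a..b} (\<lambda>s. g s * u s + f s * w s)" for a b
  proof -
    have "set_integrable lborel {a..b} (\<lambda>s. g s * u s)"
      by (rule set_integrable_mult_bounded[OF W11_S1_set_integrable[OF f]]) (auto simp: W11_S1_norm[OF u])
    moreover have "set_integrable lborel {a..b} (\<lambda>s. w s * f s)"
      by (rule set_integrable_mult_bounded[OF W11_S1_set_integrable[OF u]]) (auto simp: W11_S1_norm[OF f])
    ultimately show ?thesis by (simp add: mult.commute)
  qed
  fix a b :: real assume "a \<le> b"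
  show "f b * u b - f a * u a = (LINT s:{a..b}|lborel. g s * u s + f s * w s)"
    by (rule set_integral_product_rule(2)[OF \<open>a \<le> b\<close> W11_S1_set_integrable[OF f] W11_S1_set_integrable[OF u]
          W11_S1_FTC[OF f] W11_S1_FTC[OF u] W11_S1_continuous[OF f] W11_S1_continuous[OF u]]) auto
qed

lemma W11_S1_deviation_integrable:
  "W11_S1 f g \<Longrightarrow> set_integrable lborel {a..b} (\<lambda>s. cmod (g s - c))"
  by (intro set_integrable_norm set_integral_diff(1) W11_S1_set_integrable set_integrable_Icc_const)

lemma lebesgue_point_shift:
  assumes "lebesgue_point g \<zeta>"
  shows "lebesgue_point (\<lambda>s. g (s + T)) (\<zeta> - T)"
proof -
  have "(LINT s:{\<zeta> - T - r..\<zeta> - T + r}|lborel. cmod (g (s + T) - g (\<zeta> - T + T)))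
      = (LINT s:{\<zeta>-r..\<zeta>+r}|lborel. cmod (g s - g \<zeta>))" for r
    using set_integral_shift[where F="\<lambda>s. cmod (g s - g \<zeta>)" and a="\<zeta> - T - r" and b="\<zeta> - T + r"] by simp
  then show ?thesis using assms unfolding lebesgue_point_def by simp
qed

lemma lebesgue_point_small_radius:
  assumes "lebesgue_point g x" "0 < \<delta>" "0 < R"
  obtains r where "0 < r" "r < R" "(LINT s:{x-r..x+r}|lborel. cmod (g s - g x)) < 2*r*\<delta>"
proof -
  have "eventually (\<lambda>r. dist ((LINT s:{x-r..x+r}|lborel. cmod (g s - g x)) / (2*r)) 0 < \<delta>) (at_right 0)"
    using assms unfolding lebesgue_point_def tendsto_iff by blast
  moreover have "eventually (\<lambda>r::real. 0 < r \<and> r < R) (at_right 0)"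
    unfolding eventually_at_right_field using assms(3) by blast
  ultimately have "eventually (\<lambda>r. 0 < r \<and> r < R \<and> (LINT s:{x-r..x+r}|lborel. cmod (g s - g x)) < 2*r*\<delta>) (at_right 0)"
    by eventually_elim (auto simp: divide_less_eq mult_ac dest: abs_less_iff[THEN iffD1])
  then show ?thesis
    using that eventually_happens'[OF trivial_limit_at_right_real] by blast
qed

lemma unimodular_increment_bound:
  assumes "cmod c = 1" "cmod (c + e + of_real r * \<gamma>) = 1" "0 < r"
  shows "r * \<bar>Re (cnj c * \<gamma>)\<bar> \<le> cmod e + (r * cmod \<gamma> + cmod e)^2 / 2"
proof -
  define v where "v = e + of_real r * \<gamma>"
  have "1 = (cmod (c + v))^2" using assms(2) by (simp add: v_def add.assoc)
  also have "\<dots> = (cmod c)^2 + 2 * Re (cnj c * v) + (cmod v)^2"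
    by (simp only: cmod_power2) (simp add: power2_eq_square algebra_simps)
  finally have "r * Re (cnj c * \<gamma>) = - Re (cnj c * e) - (cmod v)^2 / 2"
    using assms(1) by (simp add: v_def algebra_simps)
  then have "\<bar>r * Re (cnj c * \<gamma>)\<bar> \<le> \<bar>Re (cnj c * e)\<bar> + (cmod v)^2 / 2"
    by (metis abs_triangle_ineq4 abs_minus_cancel abs_of_nonneg divide_nonneg_nonneg zero_le_numeral zero_le_power2
        add_uminus_conv_diff)
  moreover have "\<bar>Re (cnj c * e)\<bar> \<le> cmod e"
    using abs_Re_le_cmod[of "cnj c * e"] assms(1) by (simp add: norm_mult)
  moreover have "(cmod v)^2 \<le> (r * cmod \<gamma> + cmod e)^2"
    using norm_triangle_ineq[of e "of_real r * \<gamma>"] assms(3)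
    by (intro power_mono) (auto simp: v_def norm_mult)
  moreover have "r * \<bar>Re (cnj c * \<gamma>)\<bar> = \<bar>r * Re (cnj c * \<gamma>)\<bar>"
    using assms(3) by (simp add: abs_mult)
  ultimately show ?thesis by linarith
qed

lemma W11_S1_tangential_bound:
  assumes W: "W11_S1 f g" and r: "0 < r"
    and D: "(LINT s:{x-r..x+r}|lborel. cmod (g s - g x)) < 2*r*D"
  shows "\<bar>Re (cnj (f x) * g x)\<bar> \<le> 2 * D + r * (cmod (g x) + 2 * D)^2 / 2"
proof -
  define e where "e = (LINT s:{x..x+r}|lborel. g s - g x)"
  have "cmod e \<le> (LINT s:{x..x+r}|lborel. cmod (g s - g x))"
    unfolding e_def
    by (intro set_integral_norm_bound set_integral_diff(1) W11_S1_set_integrable[OF W] set_integrable_Icc_const)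
  also have "\<dots> \<le> (LINT s:{x-r..x+r}|lborel. cmod (g s - g x))"
    by (rule set_integral_nonneg_Icc_mono[OF W11_S1_deviation_integrable[OF W]]) (use r in auto)
  finally have e: "cmod e \<le> 2 * r * D" using D by simp
  have "f (x + r) - f x = (LINT s:{x..x+r}|lborel. g s)" using W11_S1_FTC[OF W] r by simp
  also have "\<dots> = e + of_real r * g x"
    unfolding e_def using r
    by (simp add: set_integral_diff(2)[OF W11_S1_set_integrable[OF W] set_integrable_Icc_const]
        set_integral_Icc_const scaleR_conv_of_real)
  finally have "cmod (f x + e + of_real r * g x) = 1"
    using W11_S1_norm[OF W, of "x + r"] by (simp add: algebra_simps)
  from unimodular_increment_bound[OF W11_S1_norm[OF W] this r]
  have "r * \<bar>Re (cnj (f x) * g x)\<bar> \<le> cmod e + (r * cmod (g x) + cmod e)^2 / 2" .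
  also have "\<dots> \<le> 2 * r * D + (r * cmod (g x) + 2 * r * D)^2 / 2"
    using e r by (intro add_mono divide_right_mono power_mono add_left_mono) auto
  also have "\<dots> = r * (2 * D + r * (cmod (g x) + 2 * D)^2 / 2)"
    by (simp add: power2_eq_square algebra_simps)
  finally show ?thesis using r by simp
qed

lemma lebesgue_point_derivative_orthogonal:
  assumes W: "W11_S1 f g" and L: "lebesgue_point g x"
  shows "g x = \<i> * of_real (wedge (f x) (g x)) * f x"
proof -
  define c where "c = f x"
  define \<gamma> where "\<gamma> = g x"
  define \<rho> where "\<rho> = Re (cnj c * \<gamma>)"
  have c: "cmod c = 1" unfolding c_def by (rule W11_S1_norm[OF W])
  have bound: "\<bar>\<rho>\<bar> \<le> 2 * D + r * (cmod \<gamma> + 2 * D)^2 / 2"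
    if "0 < r" "(LINT s:{x-r..x+r}|lborel. cmod (g s - g x)) < 2*r*D" for r D
    unfolding \<rho>_def c_def \<gamma>_def by (rule W11_S1_tangential_bound[OF W that])
  have "\<rho> = 0"
  proof (rule ccontr)
    assume "\<rho> \<noteq> 0"
    define D where "D = min 1 (\<bar>\<rho>\<bar>/8)"
    define B where "B = \<bar>\<rho>\<bar> / (cmod \<gamma> + 2)^2"
    have pos: "0 < cmod \<gamma> + 2" by (simp add: add_nonneg_pos)
    then have "0 < D" "0 < B" using \<open>\<rho> \<noteq> 0\<close> by (auto simp: D_def B_def)
    obtain r where r: "(LINT s:{x-r..x+r}|lborel. cmod (g s - g x)) < 2*r*D" "0 < r" "r < B"
      using lebesgue_point_small_radius[OF L \<open>0 < D\<close> \<open>0 < B\<close>] by blast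
    have "r * (cmod \<gamma> + 2 * D)^2 \<le> r * (cmod \<gamma> + 2)^2"
      using r(2) \<open>0 < D\<close> by (intro mult_left_mono power_mono) (auto simp: D_def)
    also have "\<dots> < \<bar>\<rho>\<bar>"
      using r(3) pos unfolding B_def by (simp add: pos_less_divide_eq)
    finally have "\<bar>\<rho>\<bar> < 2 * D + \<bar>\<rho>\<bar> / 2" using bound[OF r(2,1)] by linarith
    then show False by (simp add: D_def)
  qed
  then have "cnj c * \<gamma> = \<i> * of_real (wedge c \<gamma>)"
    unfolding \<rho>_def wedge_def complex_eq_iff by simp
  moreover have "c * cnj c = 1" using c complex_norm_square[of c] by simp
  ultimately have "\<gamma> = \<i> * of_real (wedge c \<gamma>) * c" by (metis mult.assoc mult.commute mult_1)
  then show ?thesis unfolding c_def \<gamma>_def .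
qed

lemma norm_sub_mult_one_minus_exp_squared:
  fixes a w t :: real
  shows "(cmod (of_real a - of_real w * (1 - exp (\<i> * of_real t))))^2 = (a - w * (1 - cos t))^2 + (w * sin t)^2"
proof -
  have "of_real a - of_real w * (1 - exp (\<i> * of_real t)) = Complex (a - w * (1 - cos t)) (w * sin t)"
    by (simp add: complex_eq_iff exp_Euler cos_of_real sin_of_real Re_exp Im_exp)
  then show ?thesis by (simp add: cmod_def)
qed

lemma norm_one_minus_exp_ii_le: "cmod (1 - exp (\<i> * of_real t)) \<le> \<bar>t\<bar>"
proof -
  have "(cmod (1 - exp (\<i> * of_real t)))^2 = (1 - cos t)^2 + (sin t)^2"
    using norm_sub_mult_one_minus_exp_squared[of 0 "-1" t] by simp
  also have "\<dots> = 4 * (sin (t/2))^2"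
    using sin_cos_squared_add[of t] cos_double_sin[of "t/2"] by (simp add: power2_eq_square algebra_simps)
  also have "\<dots> \<le> 4 * (t/2)^2"
    using abs_sin_x_le_abs_x[of "t/2"] unfolding abs_le_square_iff by simp
  also have "\<dots> = \<bar>t\<bar>^2" by (simp add: power2_eq_square)
  finally show ?thesis by (rule power2_le_imp_le) simp
qed

lemma norm_rotation_velocity_diff_le:
  assumes "cmod c = 1"
  shows "cmod (\<i> * of_real \<omega> * c - \<i> * of_real \<omega> * (c * exp (\<i> * of_real (\<omega> * t)))) \<le> \<omega>^2 * \<bar>t\<bar>"
proof -
  have "\<i> * of_real \<omega> * c - \<i> * of_real \<omega> * (c * exp (\<i> * of_real (\<omega> * t)))
      = (\<i> * of_real \<omega> * c) * (1 - exp (\<i> * of_real (\<omega> * t)))"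
    by (simp add: algebra_simps)
  then have "cmod (\<i> * of_real \<omega> * c - \<i> * of_real \<omega> * (c * exp (\<i> * of_real (\<omega> * t))))
      = \<bar>\<omega>\<bar> * cmod (1 - exp (\<i> * of_real (\<omega> * t)))"
    using assms by (simp add: norm_mult)
  also have "\<dots> \<le> \<bar>\<omega>\<bar> * (\<bar>\<omega>\<bar> * \<bar>t\<bar>)"
    using norm_one_minus_exp_ii_le[of "\<omega> * t"] by (intro mult_left_mono) (auto simp: abs_mult)
  finally show ?thesis by (simp add: power2_eq_square mult.assoc)
qed

lemma set_integral_rotation_velocity:
  fixes c :: complex and \<omega> s z :: real
  assumes "s \<le> z"
  shows "set_integrable lborel {s..z} (\<lambda>t. \<i> * of_real \<omega> * (c * exp (\<i> * of_real (\<omega> * (t - z)))))"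
    and "(LINT t:{s..z}|lborel. \<i> * of_real \<omega> * (c * exp (\<i> * of_real (\<omega> * (t - z)))))
         = c - c * exp (\<i> * of_real (\<omega> * (s - z)))"
proof -
  define m where "m t = c * exp (\<i> * of_real (\<omega> * (t - z)))" for t
  have cont: "continuous_on {s..z} (\<lambda>t. \<i> * of_real \<omega> * m t)"
    unfolding m_def by (intro continuous_intros)
  then show "set_integrable lborel {s..z} (\<lambda>t. \<i> * of_real \<omega> * (c * exp (\<i> * of_real (\<omega> * (t - z)))))"
    unfolding m_def by (rule borel_integrable_atLeastAtMost')
  have "(m has_vector_derivative \<i> * of_real \<omega> * m t) (at t within {s..z})" for t
  proof -
    have "((\<lambda>u. c * exp (\<i> * of_real \<omega> * (u - of_real z))) has_field_derivative \<i> * of_real \<omega> * m t) (at (of_real t))"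
      unfolding m_def by (auto intro!: derivative_eq_intros simp: algebra_simps)
    then have "((\<lambda>t. (\<lambda>u. c * exp (\<i> * of_real \<omega> * (u - of_real z))) (of_real t))
        has_vector_derivative \<i> * of_real \<omega> * m t) (at t within {s..z})"
      by (rule has_vector_derivative_real_field)
    moreover have "m = (\<lambda>t. (\<lambda>u. c * exp (\<i> * of_real \<omega> * (u - of_real z))) (of_real t))"
      by (auto simp: m_def algebra_simps)
    ultimately show ?thesis by simp
  qed
  then have "(LINT t:{s..z}|lborel. \<i> * of_real \<omega> * m t) = m z - m s"
    unfolding set_lebesgue_integral_def using cont assms by (intro integral_FTC_atLeastAtMost) auto
  then show "(LINT t:{s..z}|lborel. \<i> * of_real \<omega> * (c * exp (\<i> * of_real (\<omega> * (t - z)))))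
      = c - c * exp (\<i> * of_real (\<omega> * (s - z)))"
    by (simp add: m_def)
qed

lemma W11_S1_near_rotation:
  assumes W: "W11_S1 f g" and rotation: "g z = \<i> * of_real \<omega> * f z" and "s \<le> z"
  shows "cmod (f s - f z * exp (\<i> * of_real (\<omega> * (s - z))))
    \<le> (LINT t:{s..z}|lborel. cmod (g t - g z)) + \<omega>^2 * (z - s)^2"
proof -
  define m where "m t = f z * exp (\<i> * of_real (\<omega> * (t - z)))" for t
  define m' where "m' t = \<i> * of_real \<omega> * m t" for t
  have m'_int: "set_integrable lborel {s..z} m'"
    unfolding m'_def m_def by (rule set_integral_rotation_velocity(1)[OF \<open>s \<le> z\<close>])
  have "(LINT t:{s..z}|lborel. m' t) = f z - m s"
    unfolding m'_def m_def by (rule set_integral_rotation_velocity(2)[OF \<open>s \<le> z\<close>])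
  then have "f s - m s = (LINT t:{s..z}|lborel. m' t) - (LINT t:{s..z}|lborel. g t)"
    using W11_S1_FTC[OF W \<open>s \<le> z\<close>] by (simp add: algebra_simps)
  also have "\<dots> = (LINT t:{s..z}|lborel. m' t - g t)"
    by (rule set_integral_diff(2)[symmetric, OF m'_int W11_S1_set_integrable[OF W]])
  finally have difference: "f s - m s = (LINT t:{s..z}|lborel. m' t - g t)" .
  have dev: "set_integrable lborel {s..z} (\<lambda>t. cmod (g t - g z))"
    by (rule W11_S1_deviation_integrable[OF W])
  have rot: "set_integrable lborel {s..z} (\<lambda>t. cmod (g z - m' t))"
    by (intro set_integrable_norm set_integral_diff(1) set_integrable_Icc_const m'_int)
  have "cmod (f s - m s) \<le> (LINT t:{s..z}|lborel. cmod (m' t - g t))"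
    unfolding difference
    by (intro set_integral_norm_bound set_integral_diff(1) m'_int W11_S1_set_integrable[OF W])
  also have "\<dots> \<le> (LINT t:{s..z}|lborel. cmod (g t - g z) + cmod (g z - m' t))"
  proof (rule set_integral_mono)
    show "set_integrable lborel {s..z} (\<lambda>t. cmod (m' t - g t))"
      by (intro set_integrable_norm set_integral_diff(1) m'_int W11_S1_set_integrable[OF W])
    show "set_integrable lborel {s..z} (\<lambda>t. cmod (g t - g z) + cmod (g z - m' t))"
      using dev rot by (rule set_integral_add(1))
    show "cmod (m' t - g t) \<le> cmod (g t - g z) + cmod (g z - m' t)" for t
      using norm_triangle_ineq[of "g t - g z" "g z - m' t"] by (simp add: norm_minus_commute)
  qed
  also have "\<dots> = (LINT t:{s..z}|lborel. cmod (g t - g z)) + (LINT t:{s..z}|lborel. cmod (g z - m' t))"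
    by (rule set_integral_add(2)[OF dev rot])
  also have "(LINT t:{s..z}|lborel. cmod (g z - m' t)) \<le> (z - s) * (\<omega>^2 * (z - s))"
  proof (rule set_integral_Icc_le_const[OF rot _ \<open>s \<le> z\<close>])
    fix t assume t: "t \<in> {s..z}"
    have "cmod (g z - m' t) \<le> \<omega>^2 * \<bar>t - z\<bar>"
      unfolding rotation m'_def m_def by (rule norm_rotation_velocity_diff_le[OF W11_S1_norm[OF W]])
    also have "\<dots> \<le> \<omega>^2 * (z - s)"
      using t by (intro mult_left_mono) auto
    finally show "cmod (g z - m' t) \<le> \<omega>^2 * (z - s)" .
  qed
  finally show ?thesis unfolding m_def by (simp add: power2_eq_square mult_ac)
qed

section \<open>The window phase\<close>

definition ramp :: "real \<Rightarrow> real \<Rightarrow> real" where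
  "ramp \<eta> s = of_int \<lfloor>s\<rfloor> + min 1 (frac s / \<eta>)"

lemma ramp_eq_local:
  fixes n :: int and \<eta> s :: real
  assumes "0 < \<eta>" "\<eta> < 1" "n - 1 + \<eta> < s" "s < n + 1"
  shows "ramp \<eta> s = n + max 0 (min 1 ((s - n) / \<eta>))"
proof (cases "s \<ge> n")
  case True
  then have "\<lfloor>s\<rfloor> = n" using assms by (simp add: floor_eq_iff)
  moreover have "(s - n) / \<eta> \<ge> 0" using True assms by simp
  ultimately show ?thesis unfolding ramp_def frac_def by simp
next
  case False
  then have "\<lfloor>s\<rfloor> = n - 1" using assms by (simp add: floor_eq_iff)
  moreover have "(s - (n - 1)) / \<eta> \<ge> 1" using assms by (simp add: field_simps)
  moreover have "(s - n) / \<eta> \<le> 0" using False assms by (simp add: divide_nonpos_pos)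
  ultimately show ?thesis unfolding ramp_def frac_def by simp
qed

lemma continuous_on_ramp:
  assumes "0 < \<eta>" "\<eta> < 1"
  shows "continuous_on UNIV (ramp \<eta>)"
proof (rule continuous_at_imp_continuous_on, clarify)
  fix s0 :: real
  define n where "n = \<lfloor>s0\<rfloor>"
  have s0: "n - 1 + \<eta> < s0" "s0 < n + 1" using assms unfolding n_def by linarith+
  let ?S = "{n - 1 + \<eta> <..< n + 1}"
  have "continuous_on ?S (\<lambda>s. n + max 0 (min 1 ((s - n) / \<eta>)))"
    by (intro continuous_intros) (use assms in auto)
  then have "continuous_on ?S (ramp \<eta>)"
    by (rule continuous_on_cong[THEN iffD1, rotated 2]) (use ramp_eq_local[OF assms] in auto)
  then show "isCont (ramp \<eta>) s0"
    using s0 by (simp add: continuous_on_eq_continuous_at)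
qed

lemma ramp_add_1: "ramp \<eta> (s + 1) = ramp \<eta> s + 1"
  unfolding ramp_def by (simp add: frac_1_eq)

lemma ramp_has_derivative_rising:
  fixes n :: int and \<eta> s :: real
  assumes "0 < \<eta>" "\<eta> < 1" "n < s" "s < n + \<eta>"
  shows "(ramp \<eta> has_real_derivative 1 / \<eta>) (at s)"
proof (rule has_field_derivative_transform_within_open)
  show "((\<lambda>s. n + (s - n) / \<eta>) has_real_derivative 1 / \<eta>) (at s)"
    using assms by (auto intro!: derivative_eq_intros)
  fix x assume x: "x \<in> {real_of_int n<..<n + \<eta>}"
  then have "(x - n) / \<eta> \<ge> 0" "(x - n) / \<eta> \<le> 1" using assms by (auto simp: field_simps)
  then show "n + (x - n) / \<eta> = ramp \<eta> x"
    using ramp_eq_local[of \<eta> n x] assms x by auto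
qed (use assms in auto)

lemma ramp_has_derivative_flat:
  fixes n :: int and \<eta> s :: real
  assumes "0 < \<eta>" "\<eta> < 1" "n + \<eta> < s" "s < n + 1"
  shows "(ramp \<eta> has_real_derivative 0) (at s)"
proof (rule has_field_derivative_transform_within_open)
  show "((\<lambda>s. n + 1) has_real_derivative 0) (at s)"
    by (auto intro!: derivative_eq_intros)
  fix x assume x: "x \<in> {n + \<eta> <..< real_of_int n + 1}"
  then have "(x - n) / \<eta> \<ge> 1" using assms by (auto simp: field_simps)
  then show "n + 1 = ramp \<eta> x"
    using ramp_eq_local[of \<eta> n x] assms x by auto
qed (use assms in auto)

lemma ramp_eq_first_rise:
  assumes "0 < \<eta>" "0 \<le> s" "s \<le> \<eta>" "\<eta> < 1"
  shows "ramp \<eta> s = s / \<eta>"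
proof -
  have "\<lfloor>s\<rfloor> = 0" using assms by (simp add: floor_eq_iff)
  moreover have "s / \<eta> \<le> 1" using assms by simp
  ultimately show ?thesis unfolding ramp_def frac_def by simp
qed

lemma ramp_measurable [measurable]: "ramp \<eta> \<in> borel_measurable borel"
  unfolding ramp_def[abs_def] frac_def by measurable

text \<open>The phase winds \<open>k\<close> times clockwise at constant speed while \<open>x\<close> runs through the window
  \<open>[p, p + \<epsilon>]\<close> and is constant on the rest of the period.\<close>

definition window_phase :: "real \<Rightarrow> real \<Rightarrow> int \<Rightarrow> real \<Rightarrow> complex" where
  "window_phase p \<epsilon> k x = exp (- (2 * of_real pi * \<i> * of_int k) * of_real (ramp (\<epsilon>/(2*pi)) ((x - p)/(2*pi))))"

text \<open>At the two kinks of the ramp the value is irrelevant; it is taken to be \<open>0\<close>.\<close>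

definition window_phase_deriv :: "real \<Rightarrow> real \<Rightarrow> int \<Rightarrow> real \<Rightarrow> complex" where
  "window_phase_deriv p \<epsilon> k x =
     (if 0 < frac ((x-p)/(2*pi)) \<and> frac ((x-p)/(2*pi)) < \<epsilon>/(2*pi)
      then - (2 * of_real pi * \<i> * of_int k / of_real \<epsilon>) * window_phase p \<epsilon> k x else 0)"

lemma window_phase_measurable [measurable]: "window_phase p \<epsilon> k \<in> borel_measurable borel"
  unfolding window_phase_def[abs_def] by measurable

lemma window_phase_deriv_measurable [measurable]: "window_phase_deriv p \<epsilon> k \<in> borel_measurable borel"
  unfolding window_phase_deriv_def[abs_def] frac_def by measurable

context
  fixes p \<epsilon> :: real and k :: int
  assumes \<epsilon>: "0 < \<epsilon>" "\<epsilon> < 2*pi"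
begin

lemma window_ratio: "0 < \<epsilon>/(2*pi)" "\<epsilon>/(2*pi) < 1"
  using \<epsilon> pi_gt_zero by (auto simp: field_simps)

lemma continuous_on_window_angle: "continuous_on UNIV (\<lambda>x. ramp (\<epsilon>/(2*pi)) ((x - p)/(2*pi)))"
  by (intro continuous_on_compose2[OF continuous_on_ramp[OF window_ratio]] continuous_intros) auto

lemma continuous_on_window_phase: "continuous_on UNIV (window_phase p \<epsilon> k)"
  unfolding window_phase_def[abs_def]
  by (intro continuous_intros continuous_on_of_real continuous_on_window_angle[THEN continuous_on_compose2]) auto

lemma norm_window_phase: "norm (window_phase p \<epsilon> k x) = 1"
  unfolding window_phase_def by (simp add: norm_exp_eq_Re)

lemma norm_window_phase_deriv_le: "norm (window_phase_deriv p \<epsilon> k x) \<le> 2*pi*\<bar>k\<bar>/\<epsilon>"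
  using \<epsilon> by (auto simp: window_phase_deriv_def norm_mult norm_window_phase norm_divide)

lemma window_phase_has_vector_derivative:
  assumes "frac ((x-p)/(2*pi)) \<noteq> 0" "frac ((x-p)/(2*pi)) \<noteq> \<epsilon>/(2*pi)"
  shows "(window_phase p \<epsilon> k has_vector_derivative window_phase_deriv p \<epsilon> k x) (at x)"
proof -
  define \<eta> where "\<eta> = \<epsilon>/(2*pi)"
  define s where "s = (x-p)/(2*pi)"
  define n where "n = \<lfloor>s\<rfloor>"
  have \<eta>: "0 < \<eta>" "\<eta> < 1" using window_ratio by (auto simp: \<eta>_def)
  have sn: "n < s" "s < n + 1" using assms(1) unfolding n_def s_def frac_def
    by (auto simp: floor_eq_iff) (metis floor_less_iff less_irrefl of_int_floor_le order_le_less)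
  define C where "C = - (2 * of_real pi * \<i> * of_int k)"
  have V: "window_phase p \<epsilon> k = (\<lambda>z. exp (C * z)) \<circ> (\<lambda>x. of_real (ramp \<eta> ((x-p)/(2*pi))))"
    by (auto simp: window_phase_def C_def \<eta>_def)
  have chain: "((\<lambda>x. of_real (ramp \<eta> ((x-p)/(2*pi))) :: complex) has_vector_derivative of_real (D / (2*pi))) (at x)"
    if "(ramp \<eta> has_real_derivative D) (at s)" for D
  proof -
    have "((\<lambda>x. (x-p)/(2*pi)) has_real_derivative 1/(2*pi)) (at x)"
      by (auto intro!: derivative_eq_intros)
    from DERIV_chain2[OF that[unfolded s_def] this]
    have "((\<lambda>x. ramp \<eta> ((x-p)/(2*pi))) has_real_derivative D / (2*pi)) (at x)" by simp
    from has_vector_derivative_of_real[OF this] show ?thesis .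
  qed
  have exp: "((\<lambda>z. exp (C * z)) has_field_derivative C * exp (C * z)) (at z)" for z
    by (auto intro!: derivative_eq_intros)
  show ?thesis
  proof (cases "s < n + \<eta>")
    case True
    from field_vector_diff_chain_at[OF chain[OF ramp_has_derivative_rising[OF \<eta> sn(1) True]] exp]
    have "(window_phase p \<epsilon> k has_vector_derivative of_real (1/\<eta> / (2*pi)) * (C * window_phase p \<epsilon> k x)) (at x)"
      unfolding V by (simp add: o_def)
    moreover have "window_phase_deriv p \<epsilon> k x = of_real (1/\<eta> / (2*pi)) * (C * window_phase p \<epsilon> k x)"
      using True sn \<epsilon> unfolding window_phase_deriv_def frac_def s_def[symmetric] n_def[symmetric] \<eta>_def[symmetric] C_def
      by (simp add: \<eta>_def field_simps)
    ultimately show ?thesis by simp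
  next
    case False
    then have "n + \<eta> < s"
      using assms(2) unfolding frac_def s_def[symmetric] n_def[symmetric] \<eta>_def[symmetric] by auto
    from field_vector_diff_chain_at[OF chain[OF ramp_has_derivative_flat[OF \<eta> this sn(2)]] exp]
    have "(window_phase p \<epsilon> k has_vector_derivative 0) (at x)"
      unfolding V by (simp add: o_def)
    moreover have "window_phase_deriv p \<epsilon> k x = 0"
      using False unfolding window_phase_deriv_def frac_def s_def[symmetric] n_def[symmetric] \<eta>_def[symmetric] by auto
    ultimately show ?thesis by simp
  qed
qed

lemma window_phase_FTC:
  assumes ab: "a \<le> b"
  shows "window_phase p \<epsilon> k b - window_phase p \<epsilon> k a = (LINT x:{a..b}|lborel. window_phase_deriv p \<epsilon> k x)"
proof -
  define S where "S = {x \<in> {a..b}. frac ((x-p)/(2*pi)) = 0 \<or> frac ((x-p)/(2*pi)) = \<epsilon>/(2*pi)}"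
  define R where "R = {\<lfloor>(a-p)/(2*pi)\<rfloor>..\<lfloor>(b-p)/(2*pi)\<rfloor>}"
  have "S \<subseteq> (\<lambda>m. p + 2*pi * of_int m) ` R \<union> (\<lambda>m. p + \<epsilon> + 2*pi * of_int m) ` R"
  proof
    fix x assume x: "x \<in> S"
    define m where "m = \<lfloor>(x-p)/(2*pi)\<rfloor>"
    have "(a-p)/(2*pi) \<le> (x-p)/(2*pi)" "(x-p)/(2*pi) \<le> (b-p)/(2*pi)"
      using x unfolding S_def by (auto intro: divide_right_mono)
    then have "m \<in> R" unfolding R_def m_def by (auto intro: floor_mono)
    moreover have "(x-p)/(2*pi) - m = 0 \<or> (x-p)/(2*pi) - m = \<epsilon>/(2*pi)"
      using x unfolding S_def frac_def m_def by auto
    then have "x = p + 2*pi * of_int m \<or> x = p + \<epsilon> + 2*pi * of_int m"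
      by (auto simp: field_simps)
    ultimately show "x \<in> (\<lambda>m. p + 2*pi * of_int m) ` R \<union> (\<lambda>m. p + \<epsilon> + 2*pi * of_int m) ` R"
      by auto
  qed
  then have "finite S" by (rule finite_subset) (auto simp: R_def)
  then have "(window_phase_deriv p \<epsilon> k has_integral (window_phase p \<epsilon> k b - window_phase p \<epsilon> k a)) {a..b}"
  proof (rule fundamental_theorem_of_calculus_interior_strong[OF _ ab])
    show "continuous_on {a..b} (window_phase p \<epsilon> k)"
      using continuous_on_window_phase by (rule continuous_on_subset) auto
    fix x assume "x \<in> {a<..<b} - S"
    then show "(window_phase p \<epsilon> k has_vector_derivative window_phase_deriv p \<epsilon> k x) (at x)"
      unfolding S_def by (intro window_phase_has_vector_derivative) auto
  qed
  moreover have "set_integrable lborel {a..b} (window_phase_deriv p \<epsilon> k)"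
    by (rule set_integrable_Icc_bounded[OF _ norm_window_phase_deriv_le]) simp
  ultimately show ?thesis
    by (simp add: set_borel_integral_eq_integral(2) integral_unique)
qed

lemma window_phase_periodic: "window_phase p \<epsilon> k (x + 2*pi) = window_phase p \<epsilon> k x"
proof -
  define C where "C = - (2 * of_real pi * \<i> * of_int k)"
  have "exp C = 1"
  proof -
    have "C = - (\<i> * (of_int k * (of_real pi * 2)))" by (simp add: C_def mult_ac)
    then show ?thesis by (simp add: exp_minus)
  qed
  have "(x + 2*pi - p)/(2*pi) = (x - p)/(2*pi) + 1" by (simp add: field_simps)
  then have "window_phase p \<epsilon> k (x + 2*pi) = exp (C * of_real (ramp (\<epsilon>/(2*pi)) ((x - p)/(2*pi)) + 1))"
    unfolding window_phase_def C_def[symmetric] by (simp only: ramp_add_1)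
  also have "\<dots> = exp (C * of_real (ramp (\<epsilon>/(2*pi)) ((x - p)/(2*pi)))) * exp C"
    by (simp add: distrib_left exp_add)
  finally show ?thesis using \<open>exp C = 1\<close> by (simp add: window_phase_def C_def)
qed

lemma W11_S1_window_phase: "W11_S1 (window_phase p \<epsilon> k) (window_phase_deriv p \<epsilon> k)"
  unfolding W11_S1_def
proof (intro conjI allI impI)
  show "set_integrable lborel {a..b} (window_phase_deriv p \<epsilon> k)" for a b
    by (rule set_integrable_Icc_bounded[OF _ norm_window_phase_deriv_le]) simp
qed (simp_all only: window_phase_periodic norm_window_phase window_phase_FTC)

lemma S1_degree_mult_window_phase:
  assumes "W11_S1 f g" "S1_degree f = of_int d"
  shows "S1_degree (\<lambda>x. f x * window_phase p \<epsilon> k x) = of_int (d - k)"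
  unfolding window_phase_def
proof (rule S1_degree_mult_exp[OF W11_S1_continuous[OF assms(1)] _ assms(2) continuous_on_window_angle])
  show "f x \<noteq> 0" for x
    using W11_S1_norm[OF assms(1), of x] by auto
  have "(2*pi - p)/(2*pi) = (0 - p)/(2*pi) + 1" by (simp add: field_simps)
  then show "ramp (\<epsilon>/(2*pi)) ((2*pi - p)/(2*pi)) = ramp (\<epsilon>/(2*pi)) ((0 - p)/(2*pi)) + 1"
    by (simp only: ramp_add_1)
qed

lemma window_phase_inside:
  assumes "p < x" "x < p + \<epsilon>"
  shows "window_phase p \<epsilon> k x = exp (- (\<i> * of_real (2*pi*k/\<epsilon> * (x - p))))"
    and "window_phase_deriv p \<epsilon> k x = - (\<i> * of_real (2*pi*k/\<epsilon>)) * window_phase p \<epsilon> k x"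
proof -
  have s: "0 < (x-p)/(2*pi)" "(x-p)/(2*pi) < \<epsilon>/(2*pi)" using assms \<epsilon> pi_gt_zero
    by (auto simp: divide_strict_right_mono)
  then have "ramp (\<epsilon>/(2*pi)) ((x-p)/(2*pi)) = (x-p)/\<epsilon>"
    using ramp_eq_first_rise[OF window_ratio(1) _ _ window_ratio(2)] \<epsilon> by simp
  then show "window_phase p \<epsilon> k x = exp (- (\<i> * of_real (2*pi*k/\<epsilon> * (x - p))))"
    unfolding window_phase_def by (simp add: field_simps)
  have "(x-p)/(2*pi) < 1" using s(2) window_ratio(2) by linarith
  then have "frac ((x-p)/(2*pi)) = (x-p)/(2*pi)"
    using s(1) by (simp add: frac_eq)
  then show "window_phase_deriv p \<epsilon> k x = - (\<i> * of_real (2*pi*k/\<epsilon>)) * window_phase p \<epsilon> k x"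
    unfolding window_phase_deriv_def using s by (simp add: mult_ac)
qed

lemma window_phase_outside:
  assumes "0 < p" "p + \<epsilon> \<le> 2*pi" "0 \<le> x" "x \<le> 2*pi" "\<not> (p < x \<and> x < p + \<epsilon>)"
  shows "window_phase p \<epsilon> k x = 1" "window_phase_deriv p \<epsilon> k x = 0"
proof -
  define s where "s = (x-p)/(2*pi)"
  define \<eta> where "\<eta> = \<epsilon>/(2*pi)"
  have \<eta>: "0 < \<eta>" "\<eta> < 1" using window_ratio by (simp_all add: \<eta>_def)
  have "ramp \<eta> s \<in> \<int> \<and> \<not> (0 < frac s \<and> frac s < \<eta>)"
  proof (cases "x \<le> p")
    case True
    have "x - p > - 2*pi" using assms \<epsilon> by linarith
    then have s: "-1 < s" "s \<le> 0" using True pi_gt_zero unfolding s_def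
      by (auto simp: divide_nonpos_pos less_divide_eq)
    show ?thesis
    proof (cases "s = 0")
      case False
      then have fl: "\<lfloor>s\<rfloor> = -1" using s by (simp add: floor_eq_iff)
      have "\<epsilon> \<le> x - p + 2*pi" using assms by linarith
      then have "\<epsilon>/(2*pi) \<le> (x - p + 2*pi)/(2*pi)" using pi_gt_zero by (intro divide_right_mono) auto
      then have "\<eta> \<le> s + 1" unfolding s_def \<eta>_def by (simp add: add_divide_distrib)
      then show ?thesis using fl \<eta> by (simp add: ramp_def frac_def)
    qed (simp add: ramp_def)
  next
    case False
    then have "p + \<epsilon> \<le> x" using assms by auto
    then have s: "\<eta> \<le> s" "s < 1" using assms pi_gt_zero unfolding s_def \<eta>_def
      by (auto simp: divide_right_mono divide_less_eq)
    then have "\<lfloor>s\<rfloor> = 0" using \<eta> by (simp add: floor_eq_iff)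
    then show ?thesis using s \<eta> by (simp add: ramp_def frac_def)
  qed
  then obtain j :: int where j: "ramp \<eta> s = of_int j" and "\<not> (0 < frac s \<and> frac s < \<eta>)"
    by (auto elim: Ints_cases)
  then show "window_phase_deriv p \<epsilon> k x = 0"
    unfolding window_phase_deriv_def s_def[symmetric] \<eta>_def[symmetric] by auto
  have "window_phase p \<epsilon> k x = exp (- (\<i> * (of_int (k*j) * (of_real pi * 2))))"
    unfolding window_phase_def s_def[symmetric] \<eta>_def[symmetric] j by (simp add: mult_ac)
  also have "\<dots> = 1" by (simp only: exp_minus exp_2pi_1_int) simp
  finally show "window_phase p \<epsilon> k x = 1" .
qed

end

section \<open>Cost of the window modification\<close>

lemma norm_sub_mult_one_minus_exp_le:
  fixes a w t :: real
  assumes aw: "0 < a * w"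
  shows "cmod (of_real a - of_real w * (1 - exp (\<i> * of_real t)))
     \<le> \<bar>a\<bar> - \<bar>w\<bar> * (1 - cos t) + w^2 * (1 - cos t) / \<bar>a\<bar>"
proof -
  define c where "c = 1 - cos t"
  have c: "0 \<le> c" "c \<le> 2" unfolding c_def using cos_le_one[of t] cos_ge_minus_one[of t] by linarith+
  have sin2: "(sin t)^2 = c * (2 - c)" unfolding c_def using sin_cos_squared_add[of t]
    by (simp add: power2_eq_square algebra_simps)
  have a: "0 < \<bar>a\<bar>" and aw': "a * w = \<bar>a\<bar> * \<bar>w\<bar>" using aw by (auto simp: abs_mult[symmetric])
  define R where "R = \<bar>a\<bar> - \<bar>w\<bar> * c + w^2 * c / \<bar>a\<bar>"
  have "R = ((\<bar>a\<bar> - c * \<bar>w\<bar> / 2)^2 + c * w^2 * (1 - c/4)) / \<bar>a\<bar>"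
    unfolding R_def using a by (simp add: field_simps power2_eq_square)
  then have R: "0 \<le> R" using a c by simp
  have "(cmod (of_real a - of_real w * (1 - exp (\<i> * of_real t))))^2 = a^2 - 2 * (a * w) * c + 2 * w^2 * c"
    unfolding norm_sub_mult_one_minus_exp_squared c_def[symmetric] power_mult_distrib sin2
    by (simp add: power2_eq_square algebra_simps)
  also have "\<dots> = R^2 - (\<bar>w\<bar> * c - w^2 * c / \<bar>a\<bar>)^2"
    unfolding R_def aw' using a by (simp add: power2_eq_square field_simps)
  also have "\<dots> \<le> R^2" by simp
  finally show ?thesis unfolding R_def c_def[symmetric] by (rule power2_le_imp_le[OF _ R[unfolded R_def]])
qed

lemma norm_window_model_le:
  fixes a \<omega> \<theta> :: real
  assumes "cmod m = 1" "V = inverse (exp (\<i> * of_real \<theta>))" "0 < a * \<omega>"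
  shows "cmod ((\<i> * of_real \<omega> * m) * (V - 1) + m * (- (\<i> * of_real a) * V))
    \<le> \<bar>a\<bar> - \<bar>\<omega>\<bar> * (1 - cos \<theta>) + \<omega>^2 * (1 - cos \<theta>) / \<bar>a\<bar>"
proof -
  have "(\<i> * of_real \<omega> * m) * (V - 1) + m * (- (\<i> * of_real a) * V)
      = - (\<i> * m * V) * (of_real a - of_real \<omega> * (1 - exp (\<i> * of_real \<theta>)))"
    unfolding assms(2) by (simp add: field_simps)
  moreover have "cmod V = 1" unfolding assms(2) by (simp add: norm_inverse)
  ultimately show ?thesis
    using assms(1) norm_sub_mult_one_minus_exp_le[OF assms(3)] by (simp add: norm_mult)
qed

context
  fixes f g :: "real \<Rightarrow> complex" and z \<omega> \<epsilon> :: real and k :: int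
  assumes W: "W11_S1 f g" and rotation: "g z = \<i> * of_real \<omega> * f z"
    and k\<omega>: "0 < of_int k * \<omega>" and \<epsilon>: "0 < \<epsilon>" "\<epsilon> < 2*pi"
    and window: "0 < z - \<epsilon>" "z \<le> 2*pi"
begin

lemma window_cost_vanishes_outside:
  defines "V \<equiv> window_phase (z - \<epsilon>) \<epsilon> k" and "w \<equiv> window_phase_deriv (z - \<epsilon>) \<epsilon> k"
  assumes "s \<in> {0..2*pi}" "s \<notin> {z-\<epsilon><..<z}"
  shows "g s * (V s - 1) + f s * w s = 0"
  using window_phase_outside[OF \<epsilon> window(1), of s k] window assms by auto

lemma window_cost_inside:
  defines "a \<equiv> 2*pi*k/\<epsilon>" and "D \<equiv> LINT t:{z-\<epsilon>..z}|lborel. cmod (g t - g z)"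
    and "V \<equiv> window_phase (z - \<epsilon>) \<epsilon> k" and "w \<equiv> window_phase_deriv (z - \<epsilon>) \<epsilon> k"
  assumes s: "z - \<epsilon> < s" "s < z"
  shows "cmod (g s * (V s - 1) + f s * w s)
    \<le> \<bar>a\<bar> - \<bar>\<omega>\<bar> * (1 - cos (a * (s - (z - \<epsilon>)))) + \<omega>^2 * (1 - cos (a * (s - (z - \<epsilon>)))) / \<bar>a\<bar>
      + 2 * cmod (g s - g z) + 2 * \<omega>^2 * \<epsilon> + \<bar>a\<bar> * (D + \<omega>^2 * \<epsilon>^2)"
proof -
  define \<theta> where "\<theta> = a * (s - (z - \<epsilon>))"
  define m where "m = f z * exp (\<i> * of_real (\<omega> * (s - z)))"
  have V: "V s = inverse (exp (\<i> * of_real \<theta>))"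
    using window_phase_inside(1)[OF \<epsilon>, of "z - \<epsilon>" s k] s by (simp add: V_def \<theta>_def a_def exp_minus)
  have w: "w s = - (\<i> * of_real a) * V s"
    using window_phase_inside(2)[OF \<epsilon>, of "z - \<epsilon>" s k] s by (simp add: V_def w_def a_def)
  have normV: "cmod (V s) = 1" unfolding V_def by (rule norm_window_phase[OF \<epsilon>])
  have "g s * (V s - 1) + f s * w s = (\<i> * of_real \<omega> * m) * (V s - 1) + m * w s
      + (g s - \<i> * of_real \<omega> * m) * (V s - 1) + (f s - m) * w s"
    by (simp add: algebra_simps)
  then have "cmod (g s * (V s - 1) + f s * w s) \<le> cmod ((\<i> * of_real \<omega> * m) * (V s - 1) + m * w s)
      + cmod ((g s - \<i> * of_real \<omega> * m) * (V s - 1)) + cmod ((f s - m) * w s)"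
    by (metis norm_triangle_ineq order_trans add_right_mono)
  moreover have "cmod ((\<i> * of_real \<omega> * m) * (V s - 1) + m * w s)
      \<le> \<bar>a\<bar> - \<bar>\<omega>\<bar> * (1 - cos \<theta>) + \<omega>^2 * (1 - cos \<theta>) / \<bar>a\<bar>"
    unfolding w
  proof (rule norm_window_model_le[OF _ V])
    show "cmod m = 1" using W11_S1_norm[OF W, of z] by (simp add: m_def norm_mult)
    show "0 < a * \<omega>" using k\<omega> \<epsilon> by (simp add: a_def mult.assoc)
  qed
  moreover have "cmod ((g s - \<i> * of_real \<omega> * m) * (V s - 1)) \<le> 2 * cmod (g s - g z) + 2 * \<omega>^2 * \<epsilon>"
  proof -
    have "cmod (g z - \<i> * of_real \<omega> * m) \<le> \<omega>^2 * \<bar>s - z\<bar>"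
      unfolding rotation m_def by (rule norm_rotation_velocity_diff_le[OF W11_S1_norm[OF W]])
    also have "\<dots> \<le> \<omega>^2 * \<epsilon>" using s by (intro mult_left_mono) auto
    finally have "cmod (g s - \<i> * of_real \<omega> * m) \<le> cmod (g s - g z) + \<omega>^2 * \<epsilon>"
      using norm_triangle_ineq[of "g s - g z" "g z - \<i> * of_real \<omega> * m"] by simp
    moreover have "cmod (V s - 1) \<le> 2" using norm_triangle_ineq4[of "V s" 1] normV by simp
    ultimately have "cmod (g s - \<i> * of_real \<omega> * m) * cmod (V s - 1) \<le> (cmod (g s - g z) + \<omega>^2 * \<epsilon>) * 2"
      using \<epsilon> by (intro mult_mono) auto
    then show ?thesis unfolding norm_mult by (simp add: algebra_simps)
  qed
  moreover have "cmod ((f s - m) * w s) \<le> \<bar>a\<bar> * (D + \<omega>^2 * \<epsilon>^2)"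
  proof -
    have "cmod (f s - m) \<le> (LINT t:{s..z}|lborel. cmod (g t - g z)) + \<omega>^2 * (z - s)^2"
      unfolding m_def using W11_S1_near_rotation[OF W rotation] s by simp
    also have "\<dots> \<le> D + \<omega>^2 * \<epsilon>^2"
      unfolding D_def using s
      by (intro add_mono set_integral_nonneg_Icc_mono[OF W11_S1_deviation_integrable[OF W]] mult_left_mono power_mono) auto
    finally have "cmod (f s - m) \<le> D + \<omega>^2 * \<epsilon>^2" .
    moreover have "cmod (w s) = \<bar>a\<bar>" unfolding w using normV by (simp add: norm_mult)
    ultimately show ?thesis unfolding norm_mult by (simp add: mult_left_mono mult.commute)
  qed
  ultimately show ?thesis unfolding \<theta>_def by linarith
qed

lemma window_cost_pointwise:
  defines "a \<equiv> 2*pi*k/\<epsilon>" and "D \<equiv> LINT t:{z-\<epsilon>..z}|lborel. cmod (g t - g z)"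
    and "V \<equiv> window_phase (z - \<epsilon>) \<epsilon> k" and "w \<equiv> window_phase_deriv (z - \<epsilon>) \<epsilon> k"
  assumes s: "s \<in> {z-\<epsilon>..z}"
  shows "cmod (g s * (V s - 1) + f s * w s)
    \<le> \<bar>a\<bar> - \<bar>\<omega>\<bar> * (1 - cos (a * (s - (z - \<epsilon>)))) + \<omega>^2 * (1 - cos (a * (s - (z - \<epsilon>)))) / \<bar>a\<bar>
      + 2 * cmod (g s - g z) + 2 * \<omega>^2 * \<epsilon> + \<bar>a\<bar> * (D + \<omega>^2 * \<epsilon>^2)"
proof (cases "s \<in> {z-\<epsilon><..<z}")
  case True
  then show ?thesis unfolding a_def D_def V_def w_def by (intro window_cost_inside) auto
next
  case False
  define \<theta> where "\<theta> = a * (s - (z - \<epsilon>))"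
  have "0 < a * \<omega>" using k\<omega> \<epsilon> by (simp add: a_def mult.assoc)
  from norm_sub_mult_one_minus_exp_le[OF this, of \<theta>]
  have "0 \<le> \<bar>a\<bar> - \<bar>\<omega>\<bar> * (1 - cos \<theta>) + \<omega>^2 * (1 - cos \<theta>) / \<bar>a\<bar>"
    using norm_ge_zero order_trans by blast
  moreover have "0 \<le> D"
    unfolding D_def set_lebesgue_integral_def by (intro Bochner_Integration.integral_nonneg) auto
  then have "0 \<le> \<bar>a\<bar> * (D + \<omega>^2 * \<epsilon>^2)" by simp
  moreover have "0 \<le> 2 * \<omega>^2 * \<epsilon>" using \<epsilon> by simp
  moreover have "g s * (V s - 1) + f s * w s = 0"
    using window_cost_vanishes_outside[of s] s False window unfolding V_def w_def by simp
  ultimately show ?thesis unfolding \<theta>_def by simp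
qed

lemma window_cost_integral_eq_window:
  defines "V \<equiv> window_phase (z - \<epsilon>) \<epsilon> k" and "w \<equiv> window_phase_deriv (z - \<epsilon>) \<epsilon> k"
  shows "(LINT s:{0..2*pi}|lborel. cmod (g s * (V s - 1) + f s * w s))
    = (LINT s:{z-\<epsilon>..z}|lborel. cmod (g s * (V s - 1) + f s * w s))"
  unfolding set_lebesgue_integral_def
proof (rule Bochner_Integration.integral_cong[OF refl])
  fix s
  have "g s * (V s - 1) + f s * w s = 0" if "s \<in> {0..2*pi}" "s \<notin> {z-\<epsilon><..<z}"
    using window_cost_vanishes_outside that unfolding V_def w_def by blast
  moreover have "{z-\<epsilon>..z} \<subseteq> {0..2*pi}" using window by auto
  ultimately show "indicator {0..2*pi} s *\<^sub>R cmod (g s * (V s - 1) + f s * w s)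
      = indicator {z-\<epsilon>..z} s *\<^sub>R cmod (g s * (V s - 1) + f s * w s)"
    by (auto simp: indicator_def)
qed

lemma window_cost_integral:
  defines "V \<equiv> window_phase (z - \<epsilon>) \<epsilon> k" and "w \<equiv> window_phase_deriv (z - \<epsilon>) \<epsilon> k"
    and "D \<equiv> LINT t:{z-\<epsilon>..z}|lborel. cmod (g t - g z)"
  shows "(LINT s:{0..2*pi}|lborel. cmod (g s * (V s - 1) + f s * w s))
    \<le> 2*pi*\<bar>k\<bar> - \<bar>\<omega>\<bar>*\<epsilon> + \<epsilon>^2 * (\<omega>^2/(2*pi*\<bar>k\<bar>) + 2*\<omega>^2 + 2*pi*\<bar>k\<bar>*\<omega>^2) + (2 + 2*pi*\<bar>k\<bar>) * D"
proof -
  define p where "p = z - \<epsilon>"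
  define F where "F s = g s * (V s - 1) + f s * w s" for s
  define a where "a = 2*pi*k/\<epsilon>"
  have a: "k \<noteq> 0" "a \<noteq> 0" "\<bar>a\<bar> * \<epsilon> = 2*pi*\<bar>k\<bar>" using k\<omega> \<epsilon> by (auto simp: a_def abs_mult)
  have "set_integrable lborel {p..z} (\<lambda>s. (g s * V s + f s * w s) - g s)"
    using W11_S1_mult[OF W W11_S1_window_phase[OF \<epsilon>]] W11_S1_set_integrable[OF W]
    unfolding V_def w_def by (intro set_integral_diff(1)) (auto simp: W11_S1_def)
  then have F_int: "set_integrable lborel {p..z} (\<lambda>s. cmod (F s))"
    unfolding F_def by (intro set_integrable_norm) (simp add: algebra_simps)
  define K0 where "K0 = \<bar>a\<bar> - \<bar>\<omega>\<bar> + \<omega>^2/\<bar>a\<bar> + 2*\<omega>^2*\<epsilon> + \<bar>a\<bar> * (D + \<omega>^2*\<epsilon>^2)"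
  define K1 where "K1 = \<bar>\<omega>\<bar> - \<omega>^2/\<bar>a\<bar>"
  define B where "B s = (K0 + K1 * cos (a * (s - p))) + 2 * cmod (g s - g z)" for s
  have trig_int: "set_integrable lborel {p..z} (\<lambda>s. K0 + K1 * cos (a * (s - p)))"
    by (intro borel_integrable_atLeastAtMost' continuous_intros)
  have dev_int: "set_integrable lborel {p..z} (\<lambda>s. 2 * cmod (g s - g z))"
    by (intro set_integrable_mult_right W11_S1_deviation_integrable[OF W])
  have B_int: "set_integrable lborel {p..z} B"
    unfolding B_def by (rule set_integral_add(1)[OF trig_int dev_int])
  have "(LINT s:{0..2*pi}|lborel. cmod (F s)) = (LINT s:{p..z}|lborel. cmod (F s))"
    unfolding F_def V_def w_def p_def by (rule window_cost_integral_eq_window)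
  also have "\<dots> \<le> (LINT s:{p..z}|lborel. B s)"
    by (rule set_integral_mono[OF F_int B_int])
       (use window_cost_pointwise in \<open>simp add: F_def B_def K0_def K1_def V_def w_def a_def D_def p_def algebra_simps diff_divide_distrib\<close>)
  also have "(LINT s:{p..z}|lborel. B s) = \<epsilon> * K0 + 2 * D"
  proof -
    have "z = p + \<epsilon>" by (simp add: p_def)
    then have "(LINT s:{p..z}|lborel. K0 + K1 * cos (a * (s - p))) = \<epsilon> * K0"
      unfolding a_def using set_integral_cos_full_turns[OF a(1) \<epsilon>(1)] by simp
    moreover have "(LINT s:{p..z}|lborel. 2 * cmod (g s - g z)) = 2 * D"
      unfolding D_def p_def by simp
    ultimately show ?thesis
      unfolding B_def set_integral_add(2)[OF trig_int dev_int] by simp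
  qed
  also have "\<epsilon> * K0 + 2 * D = 2*pi*\<bar>k\<bar> - \<bar>\<omega>\<bar>*\<epsilon> + \<epsilon>^2 * (\<omega>^2/(2*pi*\<bar>k\<bar>) + 2*\<omega>^2 + 2*pi*\<bar>k\<bar>*\<omega>^2) + (2 + 2*pi*\<bar>k\<bar>) * D"
  proof -
    have "\<epsilon> * (\<omega>^2/\<bar>a\<bar>) = \<epsilon>^2 * (\<omega>^2/(2*pi*\<bar>k\<bar>))"
      unfolding a(3)[symmetric] using a(2) \<epsilon> by (simp add: field_simps power2_eq_square)
    moreover have "\<epsilon> * K0 = \<bar>a\<bar> * \<epsilon> - \<bar>\<omega>\<bar>*\<epsilon> + \<epsilon> * (\<omega>^2/\<bar>a\<bar>) + 2*\<omega>^2*\<epsilon>^2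
        + (\<bar>a\<bar> * \<epsilon>) * D + (\<bar>a\<bar> * \<epsilon>) * \<omega>^2*\<epsilon>^2"
      unfolding K0_def by (simp add: algebra_simps power2_eq_square)
    ultimately show ?thesis unfolding a(3) by (simp add: algebra_simps)
  qed
  finally show ?thesis unfolding F_def .
qed

end

lemma exists_degree_change_at_lebesgue_point:
  assumes W: "W11_S1 f g" and deg: "S1_degree f = of_int d"
    and L: "lebesgue_point g z" and z: "0 < z" "z \<le> 2*pi"
    and k: "0 < of_int k * wedge (f z) (g z)"
  shows "\<exists>h G. W11_S1 h G \<and> S1_degree h = of_int (d - k) \<and>
           (LINT s:{0..2*pi}|lborel. cmod (g s - G s)) < 2*pi*\<bar>k\<bar>"
proof -
  define \<omega> where "\<omega> = wedge (f z) (g z)"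
  have rotation: "g z = \<i> * of_real \<omega> * f z"
    unfolding \<omega>_def by (rule lebesgue_point_derivative_orthogonal[OF W L])
  have k\<omega>: "0 < of_int k * \<omega>" and "\<omega> \<noteq> 0" "k \<noteq> 0" using k by (auto simp: \<omega>_def)
  txt \<open>Choose \<open>\<epsilon>\<close> so small that the gain \<open>|\<omega>| \<epsilon>\<close> beats both the quadratic error \<open>\<epsilon>\<^sup>2 K\<close>
    and the Lebesgue-point error \<open>(2 + 2\<pi>|k|) D\<close>.\<close>
  define K where "K = \<omega>^2/(2*pi*\<bar>k\<bar>) + 2*\<omega>^2 + 2*pi*\<bar>k\<bar>*\<omega>^2"
  define \<delta> where "\<delta> = \<bar>\<omega>\<bar> / (4 * (2 + 2*pi*\<bar>k\<bar>))"
  have C: "0 < 2 + 2*pi*\<bar>k\<bar>" by (simp add: add_pos_nonneg)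
  then have "0 < K" "0 < \<delta>" using \<open>\<omega> \<noteq> 0\<close> \<open>k \<noteq> 0\<close>
    by (auto simp: K_def \<delta>_def intro!: add_pos_pos)
  have "0 < min (min z (2*pi)) (\<bar>\<omega>\<bar>/(2*K))" using z \<open>0 < K\<close> \<open>\<omega> \<noteq> 0\<close> by simp
  from lebesgue_point_small_radius[OF L \<open>0 < \<delta>\<close> this]
  obtain \<epsilon> where \<epsilon>_Lebesgue: "(LINT s:{z-\<epsilon>..z+\<epsilon>}|lborel. cmod (g s - g z)) < 2*\<epsilon>*\<delta>"
    and "0 < \<epsilon>" "\<epsilon> < min (min z (2*pi)) (\<bar>\<omega>\<bar>/(2*K))" .
  then have \<epsilon>: "0 < \<epsilon>" "\<epsilon> < z" "\<epsilon> < 2*pi" "\<epsilon> < \<bar>\<omega>\<bar>/(2*K)" by simp_all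
  define V where "V = window_phase (z - \<epsilon>) \<epsilon> k"
  define w where "w = window_phase_deriv (z - \<epsilon>) \<epsilon> k"
  define D where "D = (LINT t:{z-\<epsilon>..z}|lborel. cmod (g t - g z))"
  have "D \<le> (LINT s:{z-\<epsilon>..z+\<epsilon>}|lborel. cmod (g s - g z))"
    unfolding D_def using \<epsilon> by (intro set_integral_nonneg_Icc_mono W11_S1_deviation_integrable[OF W]) auto
  then have "(2 + 2*pi*\<bar>k\<bar>) * D < (2 + 2*pi*\<bar>k\<bar>) * (2*\<epsilon>*\<delta>)"
    using \<epsilon>_Lebesgue C by (intro mult_strict_left_mono) auto
  also have "\<dots> = \<bar>\<omega>\<bar> * \<epsilon> / 2" unfolding \<delta>_def using C by (simp add: field_simps)
  finally have "(2 + 2*pi*\<bar>k\<bar>) * D < \<bar>\<omega>\<bar> * \<epsilon> / 2" .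
  moreover have "\<epsilon>^2 * K < \<bar>\<omega>\<bar> * \<epsilon> / 2"
    using \<epsilon> \<open>0 < K\<close> by (simp add: power2_eq_square field_simps)
  moreover have "(LINT s:{0..2*pi}|lborel. cmod (g s * (V s - 1) + f s * w s))
      \<le> 2*pi*\<bar>k\<bar> - \<bar>\<omega>\<bar>*\<epsilon> + \<epsilon>^2 * K + (2 + 2*pi*\<bar>k\<bar>) * D"
    unfolding V_def w_def D_def K_def using \<epsilon> z
    by (intro window_cost_integral[OF W rotation k\<omega>]) auto
  ultimately have "(LINT s:{0..2*pi}|lborel. cmod (g s * (V s - 1) + f s * w s)) < 2*pi*\<bar>k\<bar>"
    by linarith
  moreover have "cmod (g s - (g s * V s + f s * w s)) = cmod (g s * (V s - 1) + f s * w s)" for s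
    by (simp add: norm_minus_commute algebra_simps)
  moreover have "W11_S1 (\<lambda>x. f x * V x) (\<lambda>s. g s * V s + f s * w s)"
    unfolding V_def w_def using \<epsilon> by (intro W11_S1_mult[OF W] W11_S1_window_phase) auto
  moreover have "S1_degree (\<lambda>x. f x * V x) = of_int (d - k)"
    unfolding V_def using \<epsilon> by (intro S1_degree_mult_window_phase[OF _ _ W deg]) auto
  ultimately show ?thesis
    by (intro exI[of _ "\<lambda>x. f x * V x"] exI[of _ "\<lambda>s. g s * V s + f s * w s"]) simp
qed

lemma exists_int_shift_into_period:
  fixes \<zeta> :: real
  obtains m :: int where "0 < \<zeta> - 2*pi * of_int m" "\<zeta> - 2*pi * of_int m \<le> 2*pi"
proof
  define m where "m = \<lceil>\<zeta>/(2*pi)\<rceil> - 1"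
  have "of_int m < \<zeta>/(2*pi)" "\<zeta>/(2*pi) \<le> of_int m + 1"
    unfolding m_def by linarith+
  then show "0 < \<zeta> - 2*pi * of_int m" "\<zeta> - 2*pi * of_int m \<le> 2*pi"
    by (simp_all add: field_simps)
qed

theorem lemma3p5:
  fixes f g :: "real \<Rightarrow> complex" and d1 d2 :: int and \<zeta> :: real
  assumes "W11_S1 f g" and "S1_degree f = of_int d1"
    and "lebesgue_point g \<zeta>" and "wedge (f \<zeta>) (g \<zeta>) \<noteq> 0"
    and "real_of_int (d2 - d1) * wedge (f \<zeta>) (g \<zeta>) < 0"
  shows "\<exists>h G. W11_S1 h G \<and> S1_degree h = of_int d2 \<and>
           (LINT s:{0..2*pi}|lborel. cmod (g s - G s)) < 2*pi*\<bar>real_of_int (d1 - d2)\<bar>"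
proof -
  txt \<open>The hypothesis \<open>wedge (f \<zeta>) (g \<zeta>) \<noteq> 0\<close> is implied by the last one and not used.
    Since \<open>g\<close> is \<open>2\<pi>\<close>-periodic only almost everywhere, the construction is carried out for
    the shifted derivative \<open>g'\<close> and transported back to \<open>g\<close>.\<close>
  obtain m :: int where "0 < \<zeta> - 2*pi * m" "\<zeta> - 2*pi * m \<le> 2*pi"
    by (rule exists_int_shift_into_period)
  moreover define z where "z = \<zeta> - 2*pi * m"
  ultimately have z: "0 < z" "z \<le> 2*pi" by simp_all
  define g' where "g' s = g (s + 2*pi * m)" for s
  have W': "W11_S1 f g'" unfolding g'_def by (rule W11_S1_shift_derivative[OF assms(1)])
  have L': "lebesgue_point g' z" unfolding g'_def z_def by (rule lebesgue_point_shift[OF assms(3)])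
  have "f z = f \<zeta>" "g' z = g \<zeta>"
    using W11_S1_periodic_int[OF assms(1), of z m] by (simp_all add: z_def g'_def)
  then have "real_of_int (d1 - d2) * wedge (f z) (g' z) = - (real_of_int (d2 - d1) * wedge (f \<zeta>) (g \<zeta>))"
    by (simp add: algebra_simps)
  with assms(5) have "0 < real_of_int (d1 - d2) * wedge (f z) (g' z)" by linarith
  from exists_degree_change_at_lebesgue_point[OF W' assms(2) L' z this]
  obtain h G where "W11_S1 h G" and deg: "S1_degree h = of_int (d1 - (d1 - d2))"
    and cost: "(LINT s:{0..2*pi}|lborel. cmod (g' s - G s)) < 2*pi*\<bar>d1 - d2\<bar>"
    by blast
  have "W11_S1 h (\<lambda>s. G s + (g s - g' s))"
    by (rule W11_S1_change_derivative[OF assms(1) W' \<open>W11_S1 h G\<close>])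
  moreover have "S1_degree h = of_int d2" using deg by simp
  moreover have "(LINT s:{0..2*pi}|lborel. cmod (g s - (G s + (g s - g' s)))) < 2*pi*\<bar>real_of_int (d1 - d2)\<bar>"
    using cost by simp
  ultimately show ?thesis by blast
qed

end
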